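(* Let $a,N$ be natural numbers and let $K$ be a closed subset of $([0,1]^a)^N$. Let $X(K)=\{x\in([0,1]^a)^{\mathbb{Z}}:\exists \ell\in\mathbb{Z}\ \forall n\in\mathbb{Z},\ x|_{\ell+nN}^{\ell+(n+1)N-1}\in K\}$. Then $\overline{\mathrm{mdim}}_{\mathrm{M}}(X(K),\sigma,D)\le \frac{\overline{\dim}_{\mathrm{M}}(K,\|\cdot\|_\infty)}{N}$.
   Context: For $x=(x_n)_{n\in\mathbb{Z}}\in([0,1]^a)^{\mathbb{Z}}$ and integers $\ell<m$, $x|_\ell^m=(x_\ell,\dots,x_m)\in([0,1]^a)^{m-\ell+1}$. $\sigma$ is the shift $(x_n)_n\mapsto(x_{n+1})_n$; $X(K)$ is a shift-invariant closed set. $D((x_n),(y_n))=\sum_{n\in\mathbb{Z}}2^{-|n|}\|x_n-y_n\|_\infty$ with $\|\cdot\|_\infty$ the max norm; on $([0,1]^a)^N\subset\mathbb{R}^{aN}$, $\|\cdot\|_\infty$ is the max over all coordinates. For a compact metric space $(E,\rho)$, $\#(E,\rho,\varepsilon)$ is the minimal number of open sets of $\rho$-diameter $<\varepsilon$ covering $E$, and $\overline{\dim}_{\mathrm{M}}(E,\rho)=\limsup_{\varepsilon\to0}\frac{\log\#(E,\rho,\varepsilon)}{\log(1/\varepsilon)}$. For $(X,T)$ with metric $d$, $d_L(x,y)=\max_{0\le n<L}d(T^nx,T^ny)$, and $\overline{\mathrm{mdim}}_{\mathrm{M}}(X,T,d)=\limsup_{\varepsilon\to0}\lim_{L\to\infty}\frac{\log\#(X,d_L,\varepsilon)}{L\log(1/\varepsilon)}$.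 *)

theory Defs
  imports "HOL-Analysis.Analysis"
begin

text \<open>Points of [0,1]^a are represented as functions nat \<Rightarrow> real, with coordinates
  i < a in [0,1] and all other coordinates equal to 0 (extensional representation).\<close>

definition cube :: "nat \<Rightarrow> (nat \<Rightarrow> real) set" where
  "cube a = {u. (\<forall>i<a. 0 \<le> u i \<and> u i \<le> 1) \<and> (\<forall>i\<ge>a. u i = 0)}"

definition block_space :: "nat \<Rightarrow> nat \<Rightarrow> (nat \<Rightarrow> nat \<Rightarrow> real) set" where
  "block_space a N = {w. (\<forall>j<N. w j \<in> cube a) \<and> (\<forall>j\<ge>N. w j = (\<lambda>_. 0))}"

definition seq_space :: "nat \<Rightarrow> (int \<Rightarrow> nat \<Rightarrow> real) set" where
  "seq_space a = {x. \<forall>n. x n \<in> cube a}"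

definition cdist :: "nat \<Rightarrow> (nat \<Rightarrow> real) \<Rightarrow> (nat \<Rightarrow> real) \<Rightarrow> real" where
  "cdist a u v = Max (insert 0 ((\<lambda>i. \<bar>u i - v i\<bar>) ` {..<a}))"

definition bdist :: "nat \<Rightarrow> nat \<Rightarrow> (nat \<Rightarrow> nat \<Rightarrow> real) \<Rightarrow> (nat \<Rightarrow> nat \<Rightarrow> real) \<Rightarrow> real" where
  "bdist a N w v = Max (insert 0 ((\<lambda>(j,i). \<bar>w j i - v j i\<bar>) ` ({..<N} \<times> {..<a})))"

definition Dmet :: "nat \<Rightarrow> (int \<Rightarrow> nat \<Rightarrow> real) \<Rightarrow> (int \<Rightarrow> nat \<Rightarrow> real) \<Rightarrow> real" where
  "Dmet a x y = (\<Sum>\<^sub>\<infinity>n::int. (1/2) ^ nat \<bar>n\<bar> * cdist a (x n) (y n))"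

definition shift :: "(int \<Rightarrow> 'b) \<Rightarrow> (int \<Rightarrow> 'b)" where
  "shift x = (\<lambda>n. x (n + 1))"

definition restr :: "(int \<Rightarrow> nat \<Rightarrow> real) \<Rightarrow> int \<Rightarrow> nat \<Rightarrow> (nat \<Rightarrow> nat \<Rightarrow> real)" where
  "restr x l N = (\<lambda>j. if j < N then x (l + int j) else (\<lambda>_. 0))"

definition XK :: "nat \<Rightarrow> nat \<Rightarrow> (nat \<Rightarrow> nat \<Rightarrow> real) set \<Rightarrow> (int \<Rightarrow> nat \<Rightarrow> real) set" where
  "XK a N K = {x \<in> seq_space a. \<exists>l::int. \<forall>n::int. restr x (l + n * int N) N \<in> K}"

definition mopen :: "'a set \<Rightarrow> ('a \<Rightarrow> 'a \<Rightarrow> real) \<Rightarrow> 'a set \<Rightarrow> bool" where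
  "mopen E d U \<longleftrightarrow> U \<subseteq> E \<and> (\<forall>x\<in>U. \<exists>r>0. \<forall>y\<in>E. d x y < r \<longrightarrow> y \<in> U)"

definition mdiam :: "('a \<Rightarrow> 'a \<Rightarrow> real) \<Rightarrow> 'a set \<Rightarrow> ereal" where
  "mdiam d U = (SUP p\<in>U \<times> U. ereal (d (fst p) (snd p)))"

definition covnum :: "'a set \<Rightarrow> ('a \<Rightarrow> 'a \<Rightarrow> real) \<Rightarrow> real \<Rightarrow> nat" where
  "covnum E d \<epsilon> = Inf {card F | F. finite F \<and> (\<forall>U\<in>F. mopen E d U \<and> mdiam d U < ereal \<epsilon>)
                                   \<and> E \<subseteq> \<Union>F}"

definition upper_mdim :: "'a set \<Rightarrow> ('a \<Rightarrow> 'a \<Rightarrow> real) \<Rightarrow> ereal" where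
  "upper_mdim E d = Limsup (at_right 0) (\<lambda>\<epsilon>. ereal (ln (real (covnum E d \<epsilon>)) / ln (1 / \<epsilon>)))"

definition dyn_dist :: "('a \<Rightarrow> 'a \<Rightarrow> real) \<Rightarrow> ('a \<Rightarrow> 'a) \<Rightarrow> nat \<Rightarrow> 'a \<Rightarrow> 'a \<Rightarrow> real" where
  "dyn_dist d T L x y = Max ((\<lambda>n. d ((T ^^ n) x) ((T ^^ n) y)) ` {..<L})"

definition upper_metric_mdim :: "'a set \<Rightarrow> ('a \<Rightarrow> 'a) \<Rightarrow> ('a \<Rightarrow> 'a \<Rightarrow> real) \<Rightarrow> ereal" where
  "upper_metric_mdim X T d = Limsup (at_right 0) (\<lambda>\<epsilon>.
     ereal (lim (\<lambda>L. ln (real (covnum X (dyn_dist d T L) \<epsilon>)) / (real L * ln (1 / \<epsilon>)))))"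

end

theory Submission
  imports Defs "HOL-Real_Asymp.Real_Asymp"
begin

text \<open>
  Covering numbers of \<open>X(K)\<close> for the Bowen metrics \<open>D\<^sub>L\<close> are submultiplicative in \<open>L\<close>, so by
  Fekete's lemma the limit in the definition of mean dimension exists. Up to a phase
  \<open>0 \<le> p < N\<close>, a point of \<open>X(K)\<close> is a concatenation of blocks
  \<open>x|\<^bsub>p+jN\<^esub>\<^bsup>p+(j+1)N-1\<^esup> \<in> K\<close>. As \<open>D\<close> sees the coordinates \<open>|n| > M\<close> only up to
  \<open>O(2\<^sup>-\<^sup>M\<^sup>/\<^sup>2)\<close>, the metric \<open>D\<^sub>L\<close> sees only about \<open>L/N + 2M\<close> blocks; prescribing for each of
  them a member of a \<open>\<delta>\<close>-cover of \<open>K\<close> gives a cover of \<open>X(K)\<close> of \<open>D\<^sub>L\<close>-diameter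
  \<open>O(\<delta> + 2\<^sup>-\<^sup>M\<^sup>/\<^sup>2)\<close> by at most \<open>N \<cdot> #(K, \<delta>)\<^bsup>L/N + 2M + 2\<^esup>\<close> sets. Taking \<open>\<delta> = \<epsilon>/c\<close> and
  \<open>L \<rightarrow> \<infinity>\<close> bounds the growth rate by \<open>log #(K, \<epsilon>/c) / N\<close>, and
  \<open>log (c/\<epsilon>) / log (1/\<epsilon>) \<rightarrow> 1\<close>.
\<close>

lemma summable_on_power_abs_int:
  fixes r :: real
  assumes "0 \<le> r" "r < 1"
  shows "(\<lambda>n::int. r ^ nat \<bar>n\<bar>) summable_on UNIV"
proof -
  have UNIV_int: "(UNIV::int set) = range int \<union> range (\<lambda>n. - int n - 1)"
  proof -
    have "n \<in> range int \<union> range (\<lambda>n. - int n - 1)" for n :: int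
      by (cases "n \<ge> 0") (auto simp: image_iff intro: exI[of _ "nat n"] exI[of _ "nat (- n - 1)"])
    then show ?thesis by blast
  qed
  have geometric: "(\<lambda>n::nat. r ^ n) summable_on UNIV"
    using summable_on_UNIV_nonneg_real_iff[of "\<lambda>n. r ^ n"] assms summable_geometric[of r] by auto
  have "(\<lambda>n::int. r ^ nat \<bar>n\<bar>) summable_on range int"
    using geometric by (subst summable_on_reindex) (auto simp: inj_on_def o_def)
  moreover have "(\<lambda>n::int. r ^ nat \<bar>n\<bar>) summable_on range (\<lambda>n. - int n - 1)"
  proof (subst summable_on_reindex)
    have "\<And>n. nat \<bar>- int n - 1\<bar> = Suc n" by auto
    then show "((\<lambda>n::int. r ^ nat \<bar>n\<bar>) \<circ> (\<lambda>n. - int n - 1)) summable_on UNIV"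
      using summable_on_cmult_right[OF geometric, of r] by (simp add: o_def)
  qed (auto simp: inj_on_def)
  ultimately show ?thesis
    unfolding UNIV_int by (rule summable_on_Un_disjoint) auto
qed

lemma cdist_nonneg: "0 \<le> cdist a u v"
  unfolding cdist_def by (rule Max_ge_iff[THEN iffD2]) auto

lemma abs_le_cdist: "i < a \<Longrightarrow> \<bar>u i - v i\<bar> \<le> cdist a u v"
  unfolding cdist_def by (rule Max_ge_iff[THEN iffD2]) auto

lemma cdist_leI: "0 \<le> c \<Longrightarrow> (\<And>i. i < a \<Longrightarrow> \<bar>u i - v i\<bar> \<le> c) \<Longrightarrow> cdist a u v \<le> c"
  unfolding cdist_def by (subst Max_le_iff) auto

lemma cdist_cube_le_1: "u \<in> cube a \<Longrightarrow> v \<in> cube a \<Longrightarrow> cdist a u v \<le> 1"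
proof (rule cdist_leI)
  fix i assume "u \<in> cube a" "v \<in> cube a" "i < a"
  then have "0 \<le> u i" "u i \<le> 1" "0 \<le> v i" "v i \<le> 1" by (auto simp: cube_def)
  then show "\<bar>u i - v i\<bar> \<le> 1" by linarith
qed simp

lemma bdist_nonneg: "0 \<le> bdist a N w v"
  unfolding bdist_def by (rule Max_ge_iff[THEN iffD2]) auto

lemma abs_le_bdist: "j < N \<Longrightarrow> i < a \<Longrightarrow> \<bar>w j i - v j i\<bar> \<le> bdist a N w v"
  unfolding bdist_def by (rule Max_ge_iff[THEN iffD2]) auto

lemma bdist_leI:
  "0 \<le> c \<Longrightarrow> (\<And>i j. j < N \<Longrightarrow> i < a \<Longrightarrow> \<bar>w j i - v j i\<bar> \<le> c) \<Longrightarrow> bdist a N w v \<le> c"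
  unfolding bdist_def by (subst Max_le_iff) auto

lemma bdist_self: "bdist a N w w = 0"
  using bdist_leI[of 0 N a w w] bdist_nonneg[of a N w w] by simp

lemma bdist_commute: "bdist a N w v = bdist a N v w"
  unfolding bdist_def by (simp add: abs_minus_commute)

lemma bdist_triangle: "bdist a N w u \<le> bdist a N w v + bdist a N v u"
proof (rule bdist_leI)
  show "0 \<le> bdist a N w v + bdist a N v u"
    by (simp add: bdist_nonneg)
  fix i j assume "j < N" "i < a"
  then have "\<bar>w j i - v j i\<bar> \<le> bdist a N w v" "\<bar>v j i - u j i\<bar> \<le> bdist a N v u"
    by (auto intro: abs_le_bdist)
  then show "\<bar>w j i - u j i\<bar> \<le> bdist a N w v + bdist a N v u" by linarith
qed

lemma cdist_le_bdist_restr: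
  assumes "k < N"
  shows "cdist a (x (s + int k)) (y (s + int k)) \<le> bdist a N (restr x s N) (restr y s N)"
proof (rule cdist_leI[OF bdist_nonneg])
  fix i assume "i < a"
  with abs_le_bdist[OF assms this, of "restr x s N" "restr y s N"] assms
  show "\<bar>x (s + int k) i - y (s + int k) i\<bar> \<le> bdist a N (restr x s N) (restr y s N)"
    by (simp add: restr_def)
qed

lemma bdist_restr_leI:
  assumes "0 \<le> c" and "\<And>k. k < N \<Longrightarrow> cdist a (x (s + int k)) (y (s + int k)) \<le> c"
  shows "bdist a N (restr x s N) (restr y s N) \<le> c"
proof (rule bdist_leI[OF assms(1)])
  fix i j assume "j < N" "i < a"
  then show "\<bar>restr x s N j i - restr y s N j i\<bar> \<le> c"
    using abs_le_cdist[of i a "x (s + int j)" "y (s + int j)"] assms(2)[of j]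
    by (simp add: restr_def)
qed

lemma Dmet_summable:
  assumes "x \<in> seq_space a" "y \<in> seq_space a"
  shows "(\<lambda>n::int. (1/2) ^ nat \<bar>n\<bar> * cdist a (x n) (y n)) summable_on UNIV"
proof (rule summable_on_comparison_test[OF summable_on_power_abs_int[of "1/2"]])
  fix n :: int
  have "cdist a (x n) (y n) \<le> 1"
    using assms by (auto simp: seq_space_def intro: cdist_cube_le_1)
  then show "(1/2) ^ nat \<bar>n\<bar> * cdist a (x n) (y n) \<le> (1/2) ^ nat \<bar>n\<bar>"
    by (simp add: mult_left_le)
qed (auto simp: cdist_nonneg)

lemma Dmet_nonneg: "0 \<le> Dmet a x y"
  unfolding Dmet_def by (rule infsum_nonneg) (simp add: cdist_nonneg)

lemma cdist_le_Dmet: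
  assumes "x \<in> seq_space a" "y \<in> seq_space a"
  shows "cdist a (x n) (y n) \<le> 2 ^ nat \<bar>n\<bar> * Dmet a x y"
proof -
  have "infsum (\<lambda>n::int. (1/2) ^ nat \<bar>n\<bar> * cdist a (x n) (y n)) {n} \<le> Dmet a x y"
    unfolding Dmet_def
    by (rule infsum_mono_neutral[OF _ Dmet_summable[OF assms]]) (auto simp: cdist_nonneg)
  then have "(1/2) ^ nat \<bar>n\<bar> * cdist a (x n) (y n) \<le> Dmet a x y"
    by simp
  then show ?thesis
    by (simp add: field_simps power_divide)
qed

text \<open>The weight \<open>(1/2)^k\<close> is split as \<open>s^k \<cdot> s^k\<close> with \<open>s = sqrt (1/2)\<close>: one factor
  keeps the series summable, the other makes the tail \<open>k > M\<close> uniformly small.\<close>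

lemma Dmet_le_of_cdist_le:
  assumes "x \<in> seq_space a" "y \<in> seq_space a" "0 \<le> \<delta>"
    and "\<And>n. \<bar>n\<bar> \<le> int M \<Longrightarrow> cdist a (x n) (y n) \<le> \<delta>"
  shows "Dmet a x y \<le> (\<delta> + sqrt (1/2) ^ M) * (\<Sum>\<^sub>\<infinity>n::int. sqrt (1/2) ^ nat \<bar>n\<bar>)"
proof -
  define s :: real where "s = sqrt (1/2)"
  have s: "0 < s" "s < 1" "(1/2) ^ k = s ^ k * s ^ k" for k
    unfolding s_def by (auto simp: power_mult_distrib[symmetric] real_sqrt_lt_1_iff)
  have summable: "(\<lambda>n::int. s ^ nat \<bar>n\<bar>) summable_on UNIV"
    using summable_on_power_abs_int[of s] s by auto
  have "Dmet a x y \<le> (\<Sum>\<^sub>\<infinity>n::int. (\<delta> + s ^ M) * s ^ nat \<bar>n\<bar>)"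
    unfolding Dmet_def
  proof (rule infsum_mono[OF Dmet_summable[OF assms(1,2)] summable_on_cmult_right[OF summable]])
    fix n :: int
    define k where "k = nat \<bar>n\<bar>"
    have sk: "0 \<le> s ^ k" "s ^ k \<le> 1"
      using s by (auto simp: power_le_one)
    have c: "0 \<le> cdist a (x n) (y n)" "cdist a (x n) (y n) \<le> 1"
      using assms(1,2) by (auto simp: seq_space_def cdist_nonneg intro: cdist_cube_le_1)
    have "s ^ k * cdist a (x n) (y n) \<le> \<delta> + s ^ M"
    proof (cases "\<bar>n\<bar> \<le> int M")
      case True
      then have "s ^ k * cdist a (x n) (y n) \<le> \<delta>"
        using assms(4)[of n] sk c(1) by (meson mult_left_le_one_le order_trans)
      then show ?thesis
        using s(1) by (simp add: add_increasing2)
    next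
      case False
      then have "s ^ k \<le> s ^ M"
        using s by (auto simp: k_def intro!: power_decreasing)
      moreover have "s ^ k * cdist a (x n) (y n) \<le> s ^ k"
        using c(2) sk(1) by (rule mult_left_le)
      ultimately show ?thesis
        using assms(3) by linarith
    qed
    then have "s ^ k * (s ^ k * cdist a (x n) (y n)) \<le> s ^ k * (\<delta> + s ^ M)"
      using sk(1) by (rule mult_left_mono)
    then show "(1/2) ^ nat \<bar>n\<bar> * cdist a (x n) (y n) \<le> (\<delta> + s ^ M) * s ^ nat \<bar>n\<bar>"
      by (simp add: s(3) k_def[symmetric] mult_ac)
  qed
  also have "\<dots> = (\<delta> + s ^ M) * (\<Sum>\<^sub>\<infinity>n::int. s ^ nat \<bar>n\<bar>)"
    by (rule infsum_cmult_right) (use summable in auto)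
  finally show ?thesis unfolding s_def .
qed

lemma funpow_shift: "(shift ^^ n) x = (\<lambda>k. x (k + int n))"
  by (induction n) (auto simp: shift_def add.assoc)

lemma funpow_shift_in_seq_space: "x \<in> seq_space a \<Longrightarrow> (shift ^^ n) x \<in> seq_space a"
  by (simp add: funpow_shift seq_space_def)

lemma restr_shift: "restr (shift x) s N = restr x (s + 1) N"
  unfolding restr_def shift_def by (auto simp: algebra_simps)

lemma XK_subset_seq_space: "XK a N K \<subseteq> seq_space a"
  unfolding XK_def by blast

lemma shift_in_XK: "x \<in> XK a N K \<Longrightarrow> shift x \<in> XK a N K"
proof -
  assume "x \<in> XK a N K"
  then obtain l where x: "x \<in> seq_space a" "\<forall>n::int. restr x (l + n * int N) N \<in> K"
    unfolding XK_def by auto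
  then have "\<forall>n::int. restr (shift x) ((l - 1) + n * int N) N \<in> K"
    by (simp add: restr_shift)
  moreover have "shift x \<in> seq_space a"
    using x(1) by (auto simp: seq_space_def shift_def)
  ultimately show ?thesis
    unfolding XK_def by blast
qed

lemma XK_phase:
  assumes "N \<ge> 1" "x \<in> XK a N K"
  obtains p where "p \<in> {0..<int N}" "\<And>j. restr x (p + j * int N) N \<in> K"
proof -
  obtain l where l: "\<forall>n::int. restr x (l + n * int N) N \<in> K"
    using assms(2) unfolding XK_def by blast
  have "l mod int N + j * int N = l + (j - l div int N) * int N" for j
    by (simp add: algebra_simps minus_mod_eq_mult_div[symmetric])
  then have "restr x (l mod int N + j * int N) N \<in> K" for j
    using l by metis
  moreover have "l mod int N \<in> {0..<int N}"
    using assms(1) by simp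
  ultimately show thesis
    using that by blast
qed

lemma int_block_decomp:
  fixes m A B :: int and N :: nat
  assumes "N \<ge> 1" "- (A * int N) \<le> m" "m < (B + 1) * int N"
  obtains j k where "- A \<le> j" "j \<le> B" "k < N" "m = j * int N + int k"
proof
  define j where "j = m div int N"
  have N: "int N > 0"
    using assms(1) by simp
  have m: "m = j * int N + m mod int N" "0 \<le> m mod int N" "m mod int N < int N"
    using N by (auto simp: j_def)
  show "m = j * int N + int (nat (m mod int N))" "nat (m mod int N) < N"
    using m by auto
  have "(- A) * int N < (j + 1) * int N" "j * int N < (B + 1) * int N"
    using m assms(2,3) by (auto simp: algebra_simps)
  then have "- A < j + 1" "j < B + 1"
    using mult_less_cancel_right_pos[OF N] by (simp_all only:)
  then show "- A \<le> j" "j \<le> B"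
    by simp_all
qed

lemma dyn_dist_add:
  assumes "1 \<le> L" "1 \<le> M"
  shows "dyn_dist d T (L + M) x y
           = max (dyn_dist d T L x y) (dyn_dist d T M ((T ^^ L) x) ((T ^^ L) y))"
proof -
  define f where "f n = d ((T ^^ n) x) ((T ^^ n) y)" for n
  have "{..<L + M} = {..<L} \<union> (\<lambda>n. n + L) ` {..<M}"
    by (auto simp: image_iff) (metis add.commute le_add_diff_inverse lessThan_iff less_diff_conv2 not_less)
  then have "f ` {..<L + M} = f ` {..<L} \<union> (\<lambda>n. d ((T ^^ n) ((T ^^ L) x)) ((T ^^ n) ((T ^^ L) y))) ` {..<M}"
    by (simp add: image_Un image_image f_def funpow_add)
  then show ?thesis
    unfolding dyn_dist_def f_def[symmetric] using assms by (simp add: Max_Un lessThan_empty_iff)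
qed

lemma Dmet_le_dyn_dist: "1 \<le> L \<Longrightarrow> Dmet a x y \<le> dyn_dist (Dmet a) shift L x y"
  unfolding dyn_dist_def by (rule Max_ge) (auto intro!: image_eqI[where x=0])

lemma dyn_dist_leI:
  "1 \<le> L \<Longrightarrow> (\<And>m. m < L \<Longrightarrow> d ((T ^^ m) x) ((T ^^ m) y) \<le> c) \<Longrightarrow> dyn_dist d T L x y \<le> c"
  unfolding dyn_dist_def by (subst Max_le_iff) (auto simp: lessThan_empty_iff)

definition eps_cover :: "'a set \<Rightarrow> ('a \<Rightarrow> 'a \<Rightarrow> real) \<Rightarrow> real \<Rightarrow> 'a set set \<Rightarrow> bool" where
  "eps_cover E d \<epsilon> F \<longleftrightarrow> finite F \<and> (\<forall>U\<in>F. mopen E d U \<and> mdiam d U < ereal \<epsilon>) \<and> E \<subseteq> \<Union>F"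

lemma covnum_eq_Inf_card: "covnum E d \<epsilon> = Inf (card ` Collect (eps_cover E d \<epsilon>))"
  unfolding covnum_def eps_cover_def by (rule arg_cong[where f=Inf]) auto

lemma covnum_le_card: "eps_cover E d \<epsilon> F \<Longrightarrow> covnum E d \<epsilon> \<le> card F"
  unfolding covnum_eq_Inf_card by (rule cInf_lower) auto

lemma covnum_attained:
  assumes "eps_cover E d \<epsilon> F0"
  obtains F where "eps_cover E d \<epsilon> F" "covnum E d \<epsilon> = card F"
proof -
  have "Inf (card ` Collect (eps_cover E d \<epsilon>)) \<in> card ` Collect (eps_cover E d \<epsilon>)"
    by (rule Inf_nat_def1) (use assms in auto)
  then show ?thesis
    using that unfolding covnum_eq_Inf_card by auto
qed

lemma mdiam_leI: "(\<And>x y. x \<in> U \<Longrightarrow> y \<in> U \<Longrightarrow> ereal (d x y) \<le> B) \<Longrightarrow> mdiam d U \<le> B"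
  unfolding mdiam_def by (rule SUP_least) auto

lemma le_mdiam: "x \<in> U \<Longrightarrow> y \<in> U \<Longrightarrow> ereal (d x y) \<le> mdiam d U"
  unfolding mdiam_def by (rule SUP_upper2[of "(x,y)"]) auto

lemma mopen_mono:
  assumes "mopen E d' U" "\<And>x y. x \<in> E \<Longrightarrow> y \<in> E \<Longrightarrow> d' x y \<le> d x y"
  shows "mopen E d U"
  using assms unfolding mopen_def by (meson le_less_trans subsetD)

text \<open>The sets \<open>U \<inter> T\<^sup>-\<^sup>1 V\<close> with \<open>U \<in> F1\<close>, \<open>V \<in> F2\<close> form an \<open>\<epsilon>\<close>-cover for
  \<open>max d1 (d2 \<circ> T)\<close>.\<close>

lemma covnum_join_le:
  assumes d: "\<And>x y. x \<in> E \<Longrightarrow> y \<in> E \<Longrightarrow> d x y = max (d1 x y) (d2 (T x) (T y))"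
    and T: "\<And>x. x \<in> E \<Longrightarrow> T x \<in> E"
    and F1: "eps_cover E d1 \<epsilon> F1" and F2: "eps_cover E d2 \<epsilon> F2"
  shows "covnum E d \<epsilon> \<le> card F1 * card F2"
proof -
  define W where "W = (\<lambda>(U, V). {x\<in>U. T x \<in> V}) ` (F1 \<times> F2)"
  have finite: "finite F1" "finite F2"
    using F1 F2 by (auto simp: eps_cover_def)
  have "mopen E d {x\<in>U. T x \<in> V} \<and> mdiam d {x\<in>U. T x \<in> V} < ereal \<epsilon>" if "U \<in> F1" "V \<in> F2" for U V
  proof
    have U: "mopen E d1 U" "mdiam d1 U < ereal \<epsilon>" and V: "mopen E d2 V" "mdiam d2 V < ereal \<epsilon>"
      using F1 F2 that by (auto simp: eps_cover_def)
    show "mopen E d {x\<in>U. T x \<in> V}"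
      unfolding mopen_def
    proof (intro conjI ballI)
      show "{x\<in>U. T x \<in> V} \<subseteq> E"
        using U by (auto simp: mopen_def)
      fix x assume x: "x \<in> {x\<in>U. T x \<in> V}"
      obtain r1 where "r1 > 0" "\<forall>y\<in>E. d1 x y < r1 \<longrightarrow> y \<in> U"
        using U x by (auto simp: mopen_def)
      moreover obtain r2 where "r2 > 0" "\<forall>y\<in>E. d2 (T x) y < r2 \<longrightarrow> y \<in> V"
        using V x by (auto simp: mopen_def)
      moreover have "x \<in> E"
        using x U by (auto simp: mopen_def)
      ultimately show "\<exists>r>0. \<forall>y\<in>E. d x y < r \<longrightarrow> y \<in> {x\<in>U. T x \<in> V}"
        using T d by (intro exI[of _ "min r1 r2"]) auto
    qed
    have "mdiam d {x\<in>U. T x \<in> V} \<le> max (mdiam d1 U) (mdiam d2 V)"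
    proof (rule mdiam_leI)
      fix x y assume "x \<in> {x\<in>U. T x \<in> V}" "y \<in> {x\<in>U. T x \<in> V}"
      moreover from this have "x \<in> E" "y \<in> E"
        using U by (auto simp: mopen_def)
      ultimately show "ereal (d x y) \<le> max (mdiam d1 U) (mdiam d2 V)"
        using le_mdiam[of x U y d1] le_mdiam[of "T x" V "T y" d2] d
        by (auto simp: max_def split: if_splits)
    qed
    then show "mdiam d {x\<in>U. T x \<in> V} < ereal \<epsilon>"
      using U V by (simp add: le_less_trans)
  qed
  moreover have "E \<subseteq> \<Union>W"
  proof
    fix x assume x: "x \<in> E"
    obtain U where "U \<in> F1" "x \<in> U"
      using F1 x by (auto simp: eps_cover_def)
    moreover obtain V where "V \<in> F2" "T x \<in> V"
      using F2 T[OF x] by (auto simp: eps_cover_def)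
    ultimately show "x \<in> \<Union>W"
      unfolding W_def by blast
  qed
  ultimately have "eps_cover E d \<epsilon> W"
    using finite unfolding eps_cover_def W_def by auto
  then have "covnum E d \<epsilon> \<le> card W"
    by (rule covnum_le_card)
  also have "\<dots> \<le> card (F1 \<times> F2)"
    unfolding W_def using finite by (intro card_image_le) auto
  finally show ?thesis
    by (simp add: card_cartesian_product)
qed

lemma ln_of_nat_nonneg: "0 \<le> ln (real n)"
  by (cases "n = 0") auto

lemma ln_of_nat_le_add:
  fixes p q r :: nat
  assumes "p \<le> q * r"
  shows "ln (real p) \<le> ln (real q) + ln (real r)"
proof (cases "p = 0")
  case True
  then show ?thesis
    by (simp add: ln_of_nat_nonneg add_nonneg_nonneg)
next
  case False
  with assms have "0 < q * r"
    by linarith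
  then have "0 < q" "0 < r"
    by simp_all
  have "real p \<le> real q * real r"
    using assms by (metis of_nat_le_iff of_nat_mult)
  then have "ln (real p) \<le> ln (real q * real r)"
    using False \<open>0 < q\<close> \<open>0 < r\<close> by simp
  also have "\<dots> = ln (real q) + ln (real r)"
    using \<open>0 < q\<close> \<open>0 < r\<close> by (simp add: ln_mult)
  finally show ?thesis .
qed

lemma ln_covnum_dyn_dist_add_le:
  assumes T: "\<And>x. x \<in> E \<Longrightarrow> T x \<in> E" and mn: "1 \<le> m" "1 \<le> n"
    and covers: "\<And>L. 1 \<le> L \<Longrightarrow> \<exists>F. eps_cover E (dyn_dist d T L) \<epsilon> F"
  shows "ln (covnum E (dyn_dist d T (m + n)) \<epsilon>)
           \<le> ln (covnum E (dyn_dist d T m) \<epsilon>) + ln (covnum E (dyn_dist d T n) \<epsilon>)"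
proof -
  obtain F1 where F1: "eps_cover E (dyn_dist d T m) \<epsilon> F1" "covnum E (dyn_dist d T m) \<epsilon> = card F1"
    using covers[OF mn(1)] covnum_attained by metis
  obtain F2 where F2: "eps_cover E (dyn_dist d T n) \<epsilon> F2" "covnum E (dyn_dist d T n) \<epsilon> = card F2"
    using covers[OF mn(2)] covnum_attained by metis
  have "covnum E (dyn_dist d T (m + n)) \<epsilon> \<le> card F1 * card F2"
  proof (rule covnum_join_le[OF _ _ F1(1) F2(1)])
    show "dyn_dist d T (m + n) x y = max (dyn_dist d T m x y) (dyn_dist d T n ((T ^^ m) x) ((T ^^ m) y))" for x y
      by (rule dyn_dist_add[OF mn])
    show "(T ^^ m) x \<in> E" if "x \<in> E" for x
      using that T by (induction m) auto
  qed
  then show ?thesis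
    unfolding F1(2) F2(2) by (rule ln_of_nat_le_add)
qed

lemma subadditive_mult_add_le:
  fixes u :: "nat \<Rightarrow> real"
  assumes sub: "\<And>m n. 1 \<le> m \<Longrightarrow> 1 \<le> n \<Longrightarrow> u (m + n) \<le> u m + u n"
    and "1 \<le> m" "1 \<le> r"
  shows "u (q * m + r) \<le> real q * u m + u r"
proof (induction q)
  case (Suc q)
  have "u (Suc q * m + r) = u (m + (q * m + r))"
    by (simp add: algebra_simps)
  also have "\<dots> \<le> u m + u (q * m + r)"
    using assms by (intro sub) auto
  finally show ?case
    using Suc by (simp add: algebra_simps)
qed simp

lemma fekete_subadditive:
  fixes u :: "nat \<Rightarrow> real"
  assumes nonneg: "\<And>n. 0 \<le> u n" and sub: "\<And>m n. 1 \<le> m \<Longrightarrow> 1 \<le> n \<Longrightarrow> u (m + n) \<le> u m + u n"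
  shows "(\<lambda>n. u n / real n) \<longlonglongrightarrow> (INF n\<in>{1..}. u n / real n)"
proof (rule metric_LIMSEQ_I)
  define l where "l = (INF n\<in>{1..}. u n / real n)"
  have bdd: "bdd_below ((\<lambda>n. u n / real n) ` {1..})"
    by (rule bdd_belowI[of _ 0]) (use nonneg in auto)
  have l_le: "l \<le> u n / real n" if "1 \<le> n" for n
    unfolding l_def by (rule cINF_lower[OF bdd]) (use that in auto)
  fix e :: real assume e: "0 < e"
  obtain m where m: "1 \<le> m" "u m / real m < l + e/2"
    using cINF_less_iff[OF _ bdd, of "l + e/2"] e unfolding l_def by auto
  define C where "C = Max (u ` {1..m})"
  have C: "u r \<le> C" if "1 \<le> r" "r \<le> m" for r
    unfolding C_def using that by (intro Max_ge) auto
  obtain n0 :: nat where n0: "C / (e/2) < real n0"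
    using reals_Archimedean2 by blast
  show "\<exists>n0. \<forall>n\<ge>n0. dist (u n / real n) l < e"
  proof (intro exI[of _ "Suc n0"] allI impI)
    fix n assume n: "Suc n0 \<le> n"
    define q where "q = (n - 1) div m"
    define r where "r = (n - 1) mod m + 1"
    have n_eq: "n = q * m + r" and r: "1 \<le> r" "r \<le> m"
      using n m(1) by (auto simp: q_def r_def Suc_le_eq)
    have "u n \<le> real q * u m + C"
      using subadditive_mult_add_le[OF sub m(1) r(1), of q] C[OF r] n_eq by simp
    also have "real q * u m = (real q * real m) * (u m / real m)"
      using m(1) by simp
    also have "\<dots> \<le> real n * (u m / real m)"
      unfolding n_eq using nonneg[of m] by (intro mult_right_mono) auto
    finally have "u n / real n \<le> u m / real m + C / real n"
      using n by (simp add: field_simps)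
    moreover have "C / (e/2) < real n"
      using n0 n by linarith
    then have "C / real n < e/2"
      using n e by (simp add: field_simps)
    ultimately have "u n / real n < l + e"
      using m(2) by linarith
    then show "dist (u n / real n) l < e"
      using l_le[of n] n by (simp add: dist_real_def)
  qed
qed

lemma convergent_ln_covnum_dyn_dist:
  assumes "\<And>x. x \<in> E \<Longrightarrow> T x \<in> E"
    and "\<And>L. 1 \<le> L \<Longrightarrow> \<exists>F. eps_cover E (dyn_dist d T L) \<epsilon> F"
  shows "convergent (\<lambda>L. ln (covnum E (dyn_dist d T L) \<epsilon>) / real L)"
  using fekete_subadditive[OF ln_of_nat_nonneg ln_covnum_dyn_dist_add_le[OF assms(1) _ _ assms(2)]]
  by (auto simp: convergent_def)

lemma mopen_bdist_ball: "mopen K (bdist a N) {w\<in>K. bdist a N c w < r}"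
  unfolding mopen_def
proof (intro conjI ballI)
  fix w assume w: "w \<in> {w\<in>K. bdist a N c w < r}"
  show "\<exists>r'>0. \<forall>y\<in>K. bdist a N w y < r' \<longrightarrow> y \<in> {w\<in>K. bdist a N c w < r}"
  proof (intro exI[of _ "r - bdist a N c w"] conjI ballI impI)
    show "0 < r - bdist a N c w"
      using w by simp
    fix y assume "y \<in> K" "bdist a N w y < r - bdist a N c w"
    then show "y \<in> {w\<in>K. bdist a N c w < r}"
      using bdist_triangle[of a N c y w] by simp
  qed
qed blast

lemma eps_cover_of_net:
  assumes "finite C" "\<And>w. w \<in> K \<Longrightarrow> \<exists>c\<in>C. bdist a N c w < \<delta> / 3" "\<delta> > 0"
  shows "eps_cover K (bdist a N) \<delta> ((\<lambda>c. {w\<in>K. bdist a N c w < \<delta> / 3}) ` C)"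
  unfolding eps_cover_def
proof (intro conjI ballI)
  fix U assume "U \<in> (\<lambda>c. {w\<in>K. bdist a N c w < \<delta> / 3}) ` C"
  then obtain c where U: "U = {w\<in>K. bdist a N c w < \<delta> / 3}"
    by blast
  show "mopen K (bdist a N) U"
    unfolding U by (rule mopen_bdist_ball)
  have "mdiam (bdist a N) U \<le> ereal (2 * \<delta> / 3)"
  proof (rule mdiam_leI)
    fix x y assume "x \<in> U" "y \<in> U"
    then show "ereal (bdist a N x y) \<le> ereal (2 * \<delta> / 3)"
      using bdist_triangle[of a N x y c] bdist_commute[of a N x c] unfolding U by auto
  qed
  also have "\<dots> < ereal \<delta>"
    using assms(3) by simp
  finally show "mdiam (bdist a N) U < ereal \<delta>" .
qed (use assms in auto)

lemma block_space_grid_net: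
  assumes "w \<in> block_space a N" "m > 0"
  shows "\<exists>g \<in> ({..<N} \<times> {..<a}) \<rightarrow>\<^sub>E {0..m}.
           bdist a N (\<lambda>j i. real (g (j, i)) / real m) w \<le> 1 / real m"
proof
  define g where "g = restrict (\<lambda>(j, i). nat \<lfloor>real m * w j i\<rfloor>) ({..<N} \<times> {..<a})"
  have w: "0 \<le> w j i" "w j i \<le> 1" if "j < N" "i < a" for j i
    using assms(1) that by (auto simp: block_space_def cube_def)
  have floor: "real (nat \<lfloor>real m * w j i\<rfloor>) = of_int \<lfloor>real m * w j i\<rfloor>"
    "\<lfloor>real m * w j i\<rfloor> \<le> int m" if "j < N" "i < a" for j i
    using w[OF that] mult_left_le[of "w j i" "real m"] by (auto simp: floor_le_iff)
  then show "g \<in> ({..<N} \<times> {..<a}) \<rightarrow>\<^sub>E {0..m}"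
    unfolding g_def by (auto simp: restrict_PiE_iff nat_le_iff)
  show "bdist a N (\<lambda>j i. real (g (j, i)) / real m) w \<le> 1 / real m"
  proof (rule bdist_leI)
    fix i j assume ji: "j < N" "i < a"
    have "of_int \<lfloor>real m * w j i\<rfloor> \<le> real m * w j i" "real m * w j i < of_int \<lfloor>real m * w j i\<rfloor> + 1"
      by linarith+
    then have "\<bar>of_int \<lfloor>real m * w j i\<rfloor> - real m * w j i\<bar> \<le> 1"
      by linarith
    moreover have "of_int \<lfloor>real m * w j i\<rfloor> / real m - w j i
        = (of_int \<lfloor>real m * w j i\<rfloor> - real m * w j i) / real m"
      using assms(2) by (simp add: field_simps)
    ultimately have "\<bar>of_int \<lfloor>real m * w j i\<rfloor> / real m - w j i\<bar> \<le> 1 / real m"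
      by (simp add: abs_divide divide_right_mono)
    then show "\<bar>real (g (j, i)) / real m - w j i\<bar> \<le> 1 / real m"
      using ji floor(1)[OF ji] by (simp add: g_def)
  qed simp
qed

lemma eps_cover_exists:
  assumes "K \<subseteq> block_space a N" "\<delta> > 0"
  shows "\<exists>F. eps_cover K (bdist a N) \<delta> F"
proof -
  obtain m :: nat where m: "m > 0" "1 / real m < \<delta> / 3"
    using reals_Archimedean[of "\<delta> / 3"] assms(2) by (auto simp: inverse_eq_divide intro: that[of "Suc _"])
  define C where "C = (\<lambda>g j i. real (g (j, i)) / real m) ` (({..<N} \<times> {..<a}) \<rightarrow>\<^sub>E {0..m})"
  have "finite C"
    unfolding C_def by (intro finite_imageI finite_PiE) auto
  moreover have "\<exists>c\<in>C. bdist a N c w < \<delta> / 3" if w: "w \<in> K" for w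
  proof -
    obtain g where "g \<in> ({..<N} \<times> {..<a}) \<rightarrow>\<^sub>E {0..m}"
      "bdist a N (\<lambda>j i. real (g (j, i)) / real m) w \<le> 1 / real m"
      using block_space_grid_net[of w a N m] w assms(1) m(1) by blast
    then show ?thesis
      using m(2) unfolding C_def by (intro bexI[of _ "\<lambda>j i. real (g (j, i)) / real m"]) auto
  qed
  ultimately show ?thesis
    using eps_cover_of_net assms(2) by blast
qed

lemma mopen_restr_near:
  assumes E: "E \<subseteq> seq_space a" and J: "finite J"
  shows "mopen E (Dmet a) {x\<in>E. \<forall>j\<in>J. \<exists>v\<in>V j. bdist a N (restr x (s j) N) v < \<delta>}"
  unfolding mopen_def
proof (intro conjI ballI)
  fix x assume x: "x \<in> {x\<in>E. \<forall>j\<in>J. \<exists>v\<in>V j. bdist a N (restr x (s j) N) v < \<delta>}"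
  then have "\<forall>j\<in>J. \<exists>v. v \<in> V j \<and> bdist a N (restr x (s j) N) v < \<delta>"
    by blast
  from bchoice[OF this] obtain v where v: "\<forall>j\<in>J. v j \<in> V j \<and> bdist a N (restr x (s j) N) (v j) < \<delta>"
    by blast
  define \<eta> where "\<eta> = Min (insert 1 ((\<lambda>j. \<delta> - bdist a N (restr x (s j) N) (v j)) ` J))"
  have \<eta>: "0 < \<eta>" "\<And>j. j \<in> J \<Longrightarrow> \<eta> \<le> \<delta> - bdist a N (restr x (s j) N) (v j)"
    unfolding \<eta>_def using J v by (simp_all add: Min_gr_iff)
  define R where "R = Max (insert 0 ((\<lambda>(j, k). nat \<bar>s j + int k\<bar>) ` (J \<times> {..<N})))"
  have R: "nat \<bar>s j + int k\<bar> \<le> R" if "j \<in> J" "k < N" for j k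
    unfolding R_def using J that by (intro Max_ge) auto
  show "\<exists>r>0. \<forall>y\<in>E. Dmet a x y < r \<longrightarrow> y \<in> {x\<in>E. \<forall>j\<in>J. \<exists>v\<in>V j. bdist a N (restr x (s j) N) v < \<delta>}"
  proof (intro exI[of _ "\<eta> / 2 ^ R"] conjI ballI impI)
    show "0 < \<eta> / 2 ^ R"
      using \<eta>(1) by simp
    fix y assume y: "y \<in> E" "Dmet a x y < \<eta> / 2 ^ R"
    have xy: "x \<in> seq_space a" "y \<in> seq_space a"
      using x y(1) E by auto
    have "bdist a N (restr y (s j) N) (v j) < \<delta>" if j: "j \<in> J" for j
    proof -
      have "bdist a N (restr x (s j) N) (restr y (s j) N) \<le> 2 ^ R * Dmet a x y"
      proof (rule bdist_restr_leI)
        fix k assume "k < N"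
        have "cdist a (x (s j + int k)) (y (s j + int k)) \<le> 2 ^ nat \<bar>s j + int k\<bar> * Dmet a x y"
          by (rule cdist_le_Dmet[OF xy])
        also have "\<dots> \<le> 2 ^ R * Dmet a x y"
          using R[OF j \<open>k < N\<close>] by (intro mult_right_mono power_increasing) (auto simp: Dmet_nonneg)
        finally show "cdist a (x (s j + int k)) (y (s j + int k)) \<le> 2 ^ R * Dmet a x y" .
      qed (simp add: Dmet_nonneg)
      also have "\<dots> < \<eta>"
        using y(2) by (simp add: field_simps)
      finally show ?thesis
        using bdist_triangle[of a N "restr y (s j) N" "v j" "restr x (s j) N"] \<eta>(2)[OF j]
        by (simp add: bdist_commute)
    qed
    then show "y \<in> {x\<in>E. \<forall>j\<in>J. \<exists>v\<in>V j. bdist a N (restr x (s j) N) v < \<delta>}"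
      using y(1) v by blast
  qed
qed blast

lemma dyn_dist_le_of_blocks:
  fixes p :: int and M L N :: nat
  assumes N: "N \<ge> 1" and L: "1 \<le> L" and p: "p \<in> {0..<int N}"
    and xy: "x \<in> seq_space a" "y \<in> seq_space a" and "0 \<le> \<eta>"
    and blocks: "\<And>j. - (int M + 1) \<le> j \<Longrightarrow> j \<le> int (L div N + M) \<Longrightarrow>
           bdist a N (restr x (p + j * int N) N) (restr y (p + j * int N) N) \<le> \<eta>"
  shows "dyn_dist (Dmet a) shift L x y
           \<le> (\<eta> + sqrt (1/2) ^ M) * (\<Sum>\<^sub>\<infinity>n::int. sqrt (1/2) ^ nat \<bar>n\<bar>)"
proof -
  have coordinates: "cdist a (x n) (y n) \<le> \<eta>" if n: "- int M \<le> n" "n \<le> int L - 1 + int M" for n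
  proof -
    have MN: "int M \<le> int M * int N"
      using N mult_left_mono[of 1 "int N" "int M"] by simp
    have p': "0 \<le> p" "p < int N"
      using p by simp_all
    have lower: "- ((int M + 1) * int N) \<le> n - p"
      using n p' MN by (simp add: algebra_simps)
    have "int L = int (L div N) * int N + int (L mod N)" "int (L mod N) < int N"
      using N by (simp_all flip: of_nat_mult of_nat_add)
    moreover have "(int (L div N + M) + 1) * int N = int (L div N) * int N + int M * int N + int N"
      by (simp add: algebra_simps)
    ultimately have upper: "n - p < (int (L div N + M) + 1) * int N"
      using n p' MN by linarith
    obtain j k where j: "- (int M + 1) \<le> j" "j \<le> int (L div N + M)" and k: "k < N"
      and "n - p = j * int N + int k"
      using int_block_decomp[OF N lower upper] .
    then have "n = p + j * int N + int k"
      by simp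
    then show ?thesis
      using cdist_le_bdist_restr[of k N a x "p + j * int N" y] blocks[of j] j k by simp
  qed
  show ?thesis
  proof (rule dyn_dist_leI[OF L])
    fix m assume m: "m < L"
    show "Dmet a ((shift ^^ m) x) ((shift ^^ m) y)
            \<le> (\<eta> + sqrt (1/2) ^ M) * (\<Sum>\<^sub>\<infinity>n::int. sqrt (1/2) ^ nat \<bar>n\<bar>)"
    proof (rule Dmet_le_of_cdist_le)
      show "(shift ^^ m) x \<in> seq_space a" "(shift ^^ m) y \<in> seq_space a"
        using xy by (simp_all add: funpow_shift_in_seq_space)
      fix n :: int assume "\<bar>n\<bar> \<le> int M"
      then have "- int M \<le> n + int m" "n + int m \<le> int L - 1 + int M"
        using m by auto
      then show "cdist a ((shift ^^ m) x n) ((shift ^^ m) y n) \<le> \<eta>"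
        unfolding funpow_shift by (rule coordinates)
    qed fact
  qed
qed

lemma XK_eps_cover:
  fixes M L N :: nat
  assumes N: "N \<ge> 1" and \<delta>: "\<delta> > 0" and F: "eps_cover K (bdist a N) \<delta> F" and L: "1 \<le> L"
    and \<epsilon>: "(3 * \<delta> + sqrt (1/2) ^ M) * (\<Sum>\<^sub>\<infinity>n::int. sqrt (1/2) ^ nat \<bar>n\<bar>) < \<epsilon>"
  shows "\<exists>G. eps_cover (XK a N K) (dyn_dist (Dmet a) shift L) \<epsilon> G
               \<and> card G \<le> N * card F ^ (L div N + 2 * M + 2)"
proof -
  define X where "X = XK a N K"
  define J where "J = {- (int M + 1) .. int (L div N + M)}"
  define W where "W p f = {x\<in>X. \<forall>j\<in>J. \<exists>v\<in>f j. bdist a N (restr x (p + j * int N) N) v < \<delta>}"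
    for p :: int and f :: "int \<Rightarrow> (nat \<Rightarrow> nat \<Rightarrow> real) set"
  define G where "G = (\<lambda>(p, f). W p f) ` ({0..<int N} \<times> (J \<rightarrow>\<^sub>E F))"
  let ?d = "dyn_dist (Dmet a) shift L"
  have finite: "finite F" "finite J"
    using F by (simp_all add: eps_cover_def J_def)
  have X: "X \<subseteq> seq_space a"
    unfolding X_def by (rule XK_subset_seq_space)
  have cover: "X \<subseteq> \<Union>G"
  proof
    fix x assume x: "x \<in> X"
    obtain p where p: "p \<in> {0..<int N}" "\<And>j. restr x (p + j * int N) N \<in> K"
      using XK_phase[OF N x[unfolded X_def]] by blast
    have "\<forall>j\<in>J. \<exists>U. U \<in> F \<and> restr x (p + j * int N) N \<in> U"
      using F p(2) unfolding eps_cover_def by (meson UnionE subsetD)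
    from bchoice[OF this] obtain f where f: "\<forall>j\<in>J. f j \<in> F \<and> restr x (p + j * int N) N \<in> f j"
      by blast
    have "restrict f J \<in> J \<rightarrow>\<^sub>E F"
      using f by auto
    moreover have "\<forall>j\<in>J. \<exists>v\<in>restrict f J j. bdist a N (restr x (p + j * int N) N) v < \<delta>"
      using f \<delta> by (metis bdist_self restrict_apply')
    then have "x \<in> W p (restrict f J)"
      unfolding W_def using x by blast
    ultimately show "x \<in> \<Union>G"
      unfolding G_def using p(1) by blast
  qed
  have open_W: "mopen X ?d (W p f)" for p f
    unfolding W_def
    using mopen_restr_near[OF X finite(2), of f N "\<lambda>j. p + j * int N" \<delta>] Dmet_le_dyn_dist[OF L]
    by (rule mopen_mono)
  have diam_W: "mdiam ?d (W p f) < ereal \<epsilon>" if p: "p \<in> {0..<int N}" and f: "f \<in> J \<rightarrow>\<^sub>E F" for p f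
  proof -
    have "?d x y \<le> (3 * \<delta> + sqrt (1/2) ^ M) * (\<Sum>\<^sub>\<infinity>n::int. sqrt (1/2) ^ nat \<bar>n\<bar>)"
      if x: "x \<in> W p f" and y: "y \<in> W p f" for x y
    proof (rule dyn_dist_le_of_blocks[OF N L p])
      show "x \<in> seq_space a" "y \<in> seq_space a"
        using x y X unfolding W_def by auto
      fix j assume "- (int M + 1) \<le> j" "j \<le> int (L div N + M)"
      then have j: "j \<in> J"
        unfolding J_def by simp
      obtain v w where v: "v \<in> f j" "bdist a N (restr x (p + j * int N) N) v < \<delta>"
        and w: "w \<in> f j" "bdist a N (restr y (p + j * int N) N) w < \<delta>"
        using x y j unfolding W_def by blast
      have "f j \<in> F"
        using f j by auto
      then have "mdiam (bdist a N) (f j) < ereal \<delta>"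
        using F by (simp add: eps_cover_def)
      then have "ereal (bdist a N v w) < ereal \<delta>"
        by (rule order.strict_trans1[OF le_mdiam[OF v(1) w(1)]])
      then have "bdist a N v w < \<delta>"
        by simp
      then show "bdist a N (restr x (p + j * int N) N) (restr y (p + j * int N) N) \<le> 3 * \<delta>"
        using v(2) w(2) bdist_triangle[of a N "restr x (p + j * int N) N" "restr y (p + j * int N) N" v]
          bdist_triangle[of a N v "restr y (p + j * int N) N" w]
          bdist_commute[of a N w "restr y (p + j * int N) N"]
        by linarith
    qed (use \<delta> in simp)
    then have "mdiam ?d (W p f) \<le> ereal ((3 * \<delta> + sqrt (1/2) ^ M) * (\<Sum>\<^sub>\<infinity>n::int. sqrt (1/2) ^ nat \<bar>n\<bar>))"
      by (intro mdiam_leI) simp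
    also have "\<dots> < ereal \<epsilon>"
      using \<epsilon> by simp
    finally show ?thesis .
  qed
  have "finite G"
    unfolding G_def using finite by (intro finite_imageI finite_cartesian_product finite_PiE) auto
  moreover have "\<forall>U\<in>G. mopen X ?d U \<and> mdiam ?d U < ereal \<epsilon>"
    unfolding G_def using open_W diam_W by auto
  ultimately have "eps_cover X ?d \<epsilon> G"
    unfolding eps_cover_def using cover by blast
  moreover have "card G \<le> N * card F ^ (L div N + 2 * M + 2)"
  proof -
    have "card G \<le> card ({0..<int N} \<times> (J \<rightarrow>\<^sub>E F))"
      unfolding G_def using finite by (intro card_image_le finite_cartesian_product finite_PiE) auto
    also have "\<dots> = N * card F ^ card J"
      using finite by (simp add: card_cartesian_product card_PiE)
    also have "card J = L div N + 2 * M + 2"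
      unfolding J_def by simp
    finally show ?thesis .
  qed
  ultimately show ?thesis
    unfolding X_def by blast
qed

lemma ln_of_nat_mono: "p \<le> q \<Longrightarrow> ln (real p) \<le> ln (real q)"
  by (cases "p = 0") (auto simp: ln_of_nat_nonneg)

lemma ln_of_nat_power: "ln (real (C ^ k)) = real k * ln (real C)"
  by (cases "C = 0"; cases "k = 0") (auto simp: ln_realpow)

lemma lim_ln_covnum_dyn_dist_le:
  assumes T: "\<And>x. x \<in> E \<Longrightarrow> T x \<in> E" and N: "N \<ge> 1" and \<epsilon>: "0 < \<epsilon>" "\<epsilon> < 1"
    and cover: "\<And>L. 1 \<le> L \<Longrightarrow> \<exists>G. eps_cover E (dyn_dist d T L) \<epsilon> G \<and> card G \<le> N * C ^ (L div N + k)"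
  shows "lim (\<lambda>L. ln (real (covnum E (dyn_dist d T L) \<epsilon>)) / (real L * ln (1 / \<epsilon>)))
           \<le> ln (real C) / (real N * ln (1 / \<epsilon>))"
proof -
  define u where "u L = ln (real (covnum E (dyn_dist d T L) \<epsilon>))" for L
  have "convergent (\<lambda>L. u L / real L)"
    unfolding u_def by (rule convergent_ln_covnum_dyn_dist) (use cover T in blast)+
  then have lim: "(\<lambda>L. u L / real L) \<longlonglongrightarrow> lim (\<lambda>L. u L / real L)"
    by (simp add: convergent_LIMSEQ_iff)
  have "u L / real L \<le> ln C / real N + (ln (real N) + k * ln C) / real L" if L: "1 \<le> L" for L
  proof -
    obtain G where G: "eps_cover E (dyn_dist d T L) \<epsilon> G" "card G \<le> N * C ^ (L div N + k)"
      using cover[OF L] by blast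
    have "u L \<le> ln (real (N * C ^ (L div N + k)))"
      unfolding u_def using covnum_le_card[OF G(1)] G(2) by (intro ln_of_nat_mono) simp
    also have "\<dots> \<le> ln (real N) + real (L div N + k) * ln C"
      using ln_of_nat_le_add[OF order.refl] ln_of_nat_power by metis
    also have "\<dots> \<le> ln (real N) + (real L / real N + k) * ln C"
    proof -
      have "real (L div N) * real N \<le> real L"
        by (metis div_times_less_eq_dividend of_nat_le_iff of_nat_mult)
      then have "real (L div N) \<le> real L / real N"
        using N by (simp add: field_simps)
      then show ?thesis
        by (intro add_left_mono mult_right_mono) (auto simp: ln_of_nat_nonneg)
    qed
    finally show ?thesis
      using L N by (simp add: field_simps)
  qed
  then have "lim (\<lambda>L. u L / real L) \<le> ln C / real N"
    by (intro LIMSEQ_le[OF lim, of "\<lambda>L. ln C / real N + (ln (real N) + k * ln C) / real L"])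
      (auto intro!: tendsto_eq_intros LIMSEQ_inverse_real_of_nat_add simp: eventually_sequentially)
  have "ln (1 / \<epsilon>) > 0"
    using \<epsilon> by simp
  then have "(\<lambda>L. u L / (real L * ln (1 / \<epsilon>))) \<longlonglongrightarrow> lim (\<lambda>L. u L / real L) / ln (1 / \<epsilon>)"
    using tendsto_divide[OF lim tendsto_const, of "ln (1 / \<epsilon>)"] by simp
  then have "lim (\<lambda>L. u L / (real L * ln (1 / \<epsilon>))) = lim (\<lambda>L. u L / real L) / ln (1 / \<epsilon>)"
    by (rule limI)
  also have "\<dots> \<le> ln C / real N / ln (1 / \<epsilon>)"
    using \<open>lim (\<lambda>L. u L / real L) \<le> ln C / real N\<close> \<open>ln (1 / \<epsilon>) > 0\<close> by (intro divide_right_mono) auto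
  finally show ?thesis
    unfolding u_def by simp
qed

lemma lim_ln_covnum_XK_le:
  assumes N: "N \<ge> 1" and K: "K \<subseteq> block_space a N"
  obtains c :: real where "c > 0"
    and "\<And>\<epsilon>. 0 < \<epsilon> \<Longrightarrow> \<epsilon> < 1 \<Longrightarrow>
           lim (\<lambda>L. ln (real (covnum (XK a N K) (dyn_dist (Dmet a) shift L) \<epsilon>)) / (real L * ln (1 / \<epsilon>)))
             \<le> ln (real (covnum K (bdist a N) (\<epsilon> / c))) / (real N * ln (1 / \<epsilon>))"
proof
  define S where "S = (\<Sum>\<^sub>\<infinity>n::int. sqrt (1/2) ^ nat \<bar>n\<bar>)"
  have "0 \<le> S"
    unfolding S_def by (rule infsum_nonneg) simp
  show c: "8 * (S + 1) > 0"
    using \<open>0 \<le> S\<close> by simp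
  fix \<epsilon> :: real assume \<epsilon>: "0 < \<epsilon>" "\<epsilon> < 1"
  define \<delta> where "\<delta> = \<epsilon> / (8 * (S + 1))"
  have "\<delta> > 0"
    unfolding \<delta>_def using \<epsilon> c by simp
  obtain M where M: "sqrt (1/2) ^ M < \<delta>"
    using real_arch_pow_inv[OF \<open>\<delta> > 0\<close>, of "sqrt (1/2)"] by (auto simp: real_sqrt_lt_1_iff)
  have "(3 * \<delta> + sqrt (1/2) ^ M) * S \<le> (4 * \<delta>) * S"
    using M \<open>0 \<le> S\<close> by (intro mult_right_mono) auto
  also have "\<dots> < \<epsilon>"
    unfolding \<delta>_def using \<epsilon> \<open>0 \<le> S\<close> by (simp add: field_simps add_pos_nonneg)
  finally have small: "(3 * \<delta> + sqrt (1/2) ^ M) * S < \<epsilon>" .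
  obtain F where F: "eps_cover K (bdist a N) \<delta> F" "covnum K (bdist a N) \<delta> = card F"
    using eps_cover_exists[OF K \<open>\<delta> > 0\<close>] covnum_attained by metis
  have cover: "\<exists>G. eps_cover (XK a N K) (dyn_dist (Dmet a) shift L) \<epsilon> G
           \<and> card G \<le> N * card F ^ (L div N + (2 * M + 2))" if "1 \<le> L" for L
    using XK_eps_cover[OF N \<open>\<delta> > 0\<close> F(1) that small[unfolded S_def]] by (simp add: add.assoc)
  have "lim (\<lambda>L. ln (real (covnum (XK a N K) (dyn_dist (Dmet a) shift L) \<epsilon>)) / (real L * ln (1 / \<epsilon>)))
      \<le> ln (real (card F)) / (real N * ln (1 / \<epsilon>))"
    by (rule lim_ln_covnum_dyn_dist_le[OF _ N \<epsilon> cover]) (rule shift_in_XK)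
  then show "lim (\<lambda>L. ln (real (covnum (XK a N K) (dyn_dist (Dmet a) shift L) \<epsilon>)) / (real L * ln (1 / \<epsilon>)))
      \<le> ln (real (covnum K (bdist a N) (\<epsilon> / (8 * (S + 1))))) / (real N * ln (1 / \<epsilon>))"
    unfolding F(2)[unfolded \<delta>_def, symmetric] .
qed

lemma Limsup_mult_tendsto_one_le:
  fixes f :: "'a \<Rightarrow> ereal" and r :: "'a \<Rightarrow> real"
  assumes F: "F \<noteq> bot" and f: "eventually (\<lambda>x. 0 \<le> f x) F" and r: "(r \<longlongrightarrow> 1) F"
  shows "Limsup F (\<lambda>x. f x * ereal (r x)) \<le> Limsup F f"
proof (rule ereal_le_mult_one_interval)
  show "Limsup F f \<noteq> -\<infinity>"
    using le_Limsup[OF F f] by auto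
  fix z :: ereal assume z: "0 < z" "z < 1"
  then obtain t where t: "z = ereal t" "0 < t" "t < 1"
    by (cases z) auto
  have "eventually (\<lambda>x. r x < 1 / t) F"
    using order_tendstoD(2)[OF r, of "1 / t"] t by simp
  then have "eventually (\<lambda>x. f x * ereal (r x) * ereal t \<le> f x) F"
  proof (rule eventually_elim2[OF _ f])
    fix x assume "r x < 1 / t" "0 \<le> f x"
    then have "f x * ereal (r x * t) \<le> f x * 1"
      using t by (intro ereal_mult_left_mono) (auto simp: field_simps)
    then show "f x * ereal (r x) * ereal t \<le> f x"
      by (simp add: mult.assoc)
  qed
  then have "Limsup F (\<lambda>x. f x * ereal (r x) * ereal t) \<le> Limsup F f"
    by (rule Limsup_mono)
  then show "z * Limsup F (\<lambda>x. f x * ereal (r x)) \<le> Limsup F f"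
    using Limsup_ereal_mult_right[OF F, of t "\<lambda>x. f x * ereal (r x)"] t by (simp add: mult.commute)
qed

lemma Limsup_at_right_rescale_le:
  fixes h :: "real \<Rightarrow> real"
  assumes c: "c > 0" and h: "\<And>\<delta>. 0 \<le> h \<delta>"
  shows "Limsup (at_right 0) (\<lambda>\<epsilon>. ereal (h (\<epsilon> / c) / ln (1 / \<epsilon>)))
           \<le> Limsup (at_right 0) (\<lambda>\<delta>. ereal (h \<delta> / ln (1 / \<delta>)))"
proof -
  define g where "g \<delta> = ereal (h \<delta> / ln (1 / \<delta>))" for \<delta>
  have "eventually (\<lambda>\<epsilon>. ereal (h (\<epsilon> / c) / ln (1 / \<epsilon>))
           = g (\<epsilon> / c) * ereal (ln (1 / (\<epsilon> / c)) / ln (1 / \<epsilon>))) (at_right 0)"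
    using eventually_at_right_real[OF c] by eventually_elim (simp add: g_def)
  then have "Limsup (at_right 0) (\<lambda>\<epsilon>. ereal (h (\<epsilon> / c) / ln (1 / \<epsilon>)))
      = Limsup (at_right 0) (\<lambda>\<epsilon>. g (\<epsilon> / c) * ereal (ln (1 / (\<epsilon> / c)) / ln (1 / \<epsilon>)))"
    by (rule Limsup_eq)
  also have "\<dots> \<le> Limsup (at_right 0) (\<lambda>\<epsilon>. g (\<epsilon> / c))"
  proof (rule Limsup_mult_tendsto_one_le)
    show "eventually (\<lambda>\<epsilon>. 0 \<le> g (\<epsilon> / c)) (at_right 0)"
      using eventually_at_right_real[OF c] by eventually_elim (simp add: g_def h)
    show "((\<lambda>\<epsilon>. ln (1 / (\<epsilon> / c)) / ln (1 / \<epsilon>)) \<longlongrightarrow> 1) (at_right 0)"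
      using c by real_asymp
  qed simp
  also have "\<dots> = Limsup (filtermap (\<lambda>\<epsilon>. \<epsilon> / c) (at_right 0)) g"
    using c by (intro Limsup_filtermap_eq[symmetric]) (auto simp: inj_def)
  also have "filtermap (\<lambda>\<epsilon>. \<epsilon> / c) (at_right 0) = at_right (0::real)"
    using filtermap_times_pos_at_right[of "inverse c" 0] c by (simp add: divide_inverse_commute)
  finally show ?thesis
    unfolding g_def .
qed

theorem lemma5p1:
  fixes a N :: nat and K :: "(nat \<Rightarrow> nat \<Rightarrow> real) set"
  assumes "N \<ge> 1"
    and "K \<subseteq> block_space a N"
    and "closed K"
  shows "upper_metric_mdim (XK a N K) shift (Dmet a)
           \<le> upper_mdim K (bdist a N) / ereal (real N)"
proof -
  obtain c where c: "c > 0" and bound: "\<And>\<epsilon>. 0 < \<epsilon> \<Longrightarrow> \<epsilon> < 1 \<Longrightarrow>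
      lim (\<lambda>L. ln (real (covnum (XK a N K) (dyn_dist (Dmet a) shift L) \<epsilon>)) / (real L * ln (1 / \<epsilon>)))
        \<le> ln (real (covnum K (bdist a N) (\<epsilon> / c))) / (real N * ln (1 / \<epsilon>))"
    using lim_ln_covnum_XK_le[OF assms(1,2)] by blast
  define h where "h \<delta> = ln (real (covnum K (bdist a N) \<delta>))" for \<delta>
  have "upper_metric_mdim (XK a N K) shift (Dmet a)
      \<le> Limsup (at_right 0) (\<lambda>\<epsilon>. ereal (h (\<epsilon> / c) / ln (1 / \<epsilon>)) * ereal (1 / real N))"
    unfolding upper_metric_mdim_def
  proof (rule Limsup_mono)
    show "eventually (\<lambda>\<epsilon>. ereal (lim (\<lambda>L. ln (real (covnum (XK a N K) (dyn_dist (Dmet a) shift L) \<epsilon>))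
              / (real L * ln (1 / \<epsilon>)))) \<le> ereal (h (\<epsilon> / c) / ln (1 / \<epsilon>)) * ereal (1 / real N))
            (at_right 0)"
      using eventually_at_right_real[OF zero_less_one] by eventually_elim (use bound in \<open>simp add: h_def mult.commute\<close>)
  qed
  also have "\<dots> = Limsup (at_right 0) (\<lambda>\<epsilon>. ereal (h (\<epsilon> / c) / ln (1 / \<epsilon>))) * ereal (1 / real N)"
    by (rule Limsup_ereal_mult_right) simp_all
  also have "\<dots> \<le> upper_mdim K (bdist a N) * ereal (1 / real N)"
    unfolding upper_mdim_def h_def
    by (intro ereal_mult_right_mono Limsup_at_right_rescale_le[OF c]) (simp_all add: ln_of_nat_nonneg)
  also have "\<dots> = upper_mdim K (bdist a N) / ereal (real N)"
    using assms(1) by (simp add: divide_ereal_def inverse_eq_divide)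
  finally show ?thesis .
qed

end
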